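(* The MPB rule $M$ does not satisfy the narrow-top criterion; that is, there exists a PB instance $I$ and a project $p$ with $p\in A_i$ for every voter $i\in N$ such that $p\notin W_M(I)$.
   Context: A PB instance is $I=\langle N,P,c,b,\mathcal{A}\rangle$ with voters $N=\{1,\dots,n\}$, projects $P$, costs $c:P\to\mathbb{N}$, budget $b\in\mathbb{N}$, and approval sets $A_i\subseteq P$. $c(S)=\sum_{p\in S}c(p)$; $S$ is feasible if $c(S)\le b$; $u_i(S)=c(S\cap A_i)$. The MPB rule $M$ outputs $M(I)$, the set of all feasible $S$ maximizing $\min_{i\in N}u_i(S)$ among feasible sets. $W_M(I)=\{p\in P:\exists S\in M(I),\ p\in S\}$. *)

theory Defs
  imports Main
begin

definition pb_cost :: "('p \<Rightarrow> nat) \<Rightarrow> 'p set \<Rightarrow> nat" where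
  "pb_cost c S = (\<Sum>q\<in>S. c q)"

definition pb_feasible :: "'p set \<Rightarrow> ('p \<Rightarrow> nat) \<Rightarrow> nat \<Rightarrow> 'p set \<Rightarrow> bool" where
  "pb_feasible P c b S \<longleftrightarrow> S \<subseteq> P \<and> pb_cost c S \<le> b"

definition pb_util :: "('p \<Rightarrow> nat) \<Rightarrow> (nat \<Rightarrow> 'p set) \<Rightarrow> nat \<Rightarrow> 'p set \<Rightarrow> nat" where
  "pb_util c A i S = pb_cost c (S \<inter> A i)"

definition pb_minutil :: "nat \<Rightarrow> ('p \<Rightarrow> nat) \<Rightarrow> (nat \<Rightarrow> 'p set) \<Rightarrow> 'p set \<Rightarrow> nat" where
  "pb_minutil n c A S = Min ((\<lambda>i. pb_util c A i S) ` {1..n})"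

definition MPB :: "nat \<Rightarrow> 'p set \<Rightarrow> ('p \<Rightarrow> nat) \<Rightarrow> nat \<Rightarrow> (nat \<Rightarrow> 'p set) \<Rightarrow> 'p set set" where
  "MPB n P c b A = {S. pb_feasible P c b S \<and>
     (\<forall>T. pb_feasible P c b T \<longrightarrow> pb_minutil n c A T \<le> pb_minutil n c A S)}"

definition W_MPB :: "nat \<Rightarrow> 'p set \<Rightarrow> ('p \<Rightarrow> nat) \<Rightarrow> nat \<Rightarrow> (nat \<Rightarrow> 'p set) \<Rightarrow> 'p set" where
  "W_MPB n P c b A = {p\<in>P. \<exists>S\<in>MPB n P c b A. p \<in> S}"

end

theory Submission
  imports Defs
begin

text \<open>Two voters share a cheap project 0 (cost 1) and each also approves an own project of
  cost 2; the budget is 4. Funding both own projects gives every voter utility 2, whereas a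
  feasible set containing 0 can afford at most one own project, leaving the other voter with
  utility 1. So no MPB outcome funds the unanimously approved project 0.\<close>

lemma notin_W_MPB_if_outperformed:
  assumes "pb_feasible P c b T"
    and "\<And>S. pb_feasible P c b S \<Longrightarrow> p \<in> S \<Longrightarrow> pb_minutil n c A S < pb_minutil n c A T"
  shows "p \<notin> W_MPB n P c b A"
  using assms unfolding W_MPB_def MPB_def by (auto simp: not_le)

lemma pb_minutil_two_voters:
  "pb_minutil 2 c A S = min (pb_util c A 1 S) (pb_util c A 2 S)"
proof -
  have "{1..2::nat} = {1, 2}" by auto
  then show ?thesis by (simp add: pb_minutil_def)
qed

definition shared_cost :: "nat \<Rightarrow> nat" where
  "shared_cost q = (if q = 0 then 1 else 2)"

definition shared_approvals :: "nat \<Rightarrow> nat set" where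
  "shared_approvals i = (if i = 1 then {0, 1} else {0, 2})"

lemma shared_minutil:
  "pb_minutil 2 shared_cost shared_approvals S =
     min (pb_cost shared_cost (S \<inter> {0, 1})) (pb_cost shared_cost (S \<inter> {0, 2}))"
  by (simp add: pb_minutil_two_voters pb_util_def shared_approvals_def)

lemma shared_own_projects_minutil:
  "pb_minutil 2 shared_cost shared_approvals {1, 2} = 2"
  by (simp add: shared_minutil pb_cost_def shared_cost_def)

lemma shared_minutil_with_shared_project:
  assumes feasible: "pb_feasible {0, 1, 2} shared_cost 4 S" and "0 \<in> S"
  shows "pb_minutil 2 shared_cost shared_approvals S \<le> 1"
proof -
  have "S \<subseteq> {0, 1, 2}" and cost: "pb_cost shared_cost S \<le> 4"
    using feasible by (auto simp: pb_feasible_def)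
  with \<open>0 \<in> S\<close> have "S = {0} \<or> S = {0, 1} \<or> S = {0, 2} \<or> S = {0, 1, 2}"
    by (cases "1 \<in> S"; cases "2 \<in> S") auto
  moreover have "S \<noteq> {0, 1, 2}"
    using cost by (auto simp: pb_cost_def shared_cost_def)
  ultimately show ?thesis
    by (auto simp: shared_minutil pb_cost_def shared_cost_def)
qed

theorem proposition2:
  shows "\<exists>(n::nat) (P::nat set) (c::nat \<Rightarrow> nat) (b::nat) (A::nat \<Rightarrow> nat set) p.
     n \<ge> 1 \<and> finite P \<and> (\<forall>q\<in>P. c q > 0) \<and> (\<forall>i\<in>{1..n}. A i \<subseteq> P) \<and>
     p \<in> P \<and> c p \<le> b \<and> (\<forall>i\<in>{1..n}. p \<in> A i) \<and> p \<notin> W_MPB n P c b A"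
proof -
  have "pb_feasible {0, 1, 2} shared_cost 4 {1, 2}"
    by (simp add: pb_feasible_def pb_cost_def shared_cost_def)
  then have "0 \<notin> W_MPB 2 {0, 1, 2} shared_cost 4 shared_approvals"
    by (rule notin_W_MPB_if_outperformed)
      (use shared_minutil_with_shared_project shared_own_projects_minutil in fastforce)
  moreover have "\<forall>i\<in>{1..2::nat}. shared_approvals i \<subseteq> {0, 1, 2} \<and> 0 \<in> shared_approvals i"
    by (simp add: shared_approvals_def)
  ultimately show ?thesis
    by (intro exI[of _ 2] exI[of _ "{0, 1, 2}"] exI[of _ shared_cost] exI[of _ 4]
        exI[of _ shared_approvals] exI[of _ 0]) (auto simp: shared_cost_def)
qed

end
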